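(* Let $\mathbb{C}^*$ act on $\mathrm{Sp}(i_1,\dots,i_m)$ via its action on $V$ given by $t\cdot e_i=t^{-1}e_i$, $t\cdot f_i=tf_i$. Then $w\mapsto\mathcal F(w)$ is a bijection from the set of row strict tableaux of type $(i_1,\dots,i_m)$ onto the set of fixed points of this action on $\mathrm{Sp}(i_1,\dots,i_m)$.
   Context: Fix integers $n\ge 2k\ge 0$; $V$ is an $n$-dimensional complex vector space with basis $e_1,\dots,e_{n-k},f_1,\dots,f_k$ and $N$ is the nilpotent endomorphism $Ne_i=e_{i-1}$, $Nf_i=f_{i-1}$, $e_0=f_0=0$. For $0<i_1<\dots<i_m=n$, $\mathrm{Sp}(i_1,\dots,i_m)$ is the variety of partial flags $F_{i_1}\subset\dots\subset F_{i_m}$ ($\dim F_{i_l}=i_l$) with $NF_{i_l}\subset F_{i_{l-1}}$ for all $l$ ($F_{i_0}=\{0\}$). A row strict tableau of type $(i_1,\dots,i_m)$ is a two-row Young diagram, top row $n-k$ boxes, bottom row $k$ boxes, filled so that $i_l$ occurs exactly $i_l-i_{l-1}$ times ($i_0=0$) and entries strictly decrease along each row. For such $w$, $\mathcal F(w)$ is the partial flag with $\mathcal F_{i_l}(w)=\langle e_j,f_r: j\le t_{i_l},\ r\le b_{i_l}\rangle$, where $t_s$ (resp. $b_s$) is the number of entries $\le s$ in the top (resp. bottom) row of $w$. *)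

theory Defs
  imports Complex_Main "HOL-Library.Function_Algebras"
begin

text \<open>The vector space V = C^n. A vector is a function on indices (True, j) (standing for e_j)
  and (False, r) (standing for f_r), supported on the index set below.\<close>

type_synonym vect = "bool \<times> nat \<Rightarrow> complex"

definition cscale :: "complex \<Rightarrow> vect \<Rightarrow> vect" where
  "cscale c v = (\<lambda>x. c * v x)"

definition csubspace :: "vect set \<Rightarrow> bool" where
  "csubspace = module.subspace cscale"

definition cspan :: "vect set \<Rightarrow> vect set" where
  "cspan = module.span cscale"

definition cdim :: "vect set \<Rightarrow> nat" where
  "cdim = vector_space.dim cscale"

definition bv :: "bool \<Rightarrow> nat \<Rightarrow> vect" where
  "bv b j = (\<lambda>x. if x = (b, j) then 1 else 0)"

definition Vsp :: "nat \<Rightarrow> nat \<Rightarrow> vect set" where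
  "Vsp n k = cspan ({bv True j | j. 1 \<le> j \<and> j \<le> n - k} \<union> {bv False r | r. 1 \<le> r \<and> r \<le> k})"

text \<open>The nilpotent N: N e_j = e_{j-1}, N f_r = f_{r-1}, e_0 = f_0 = 0 (linear extension).\<close>
definition Nop :: "vect \<Rightarrow> vect" where
  "Nop v = (\<lambda>(b, j). if j = 0 then 0 else v (b, Suc j))"

text \<open>A type (i_1,...,i_m) is given as the list [i_1,...,i_m]; i_0 = 0.\<close>
definition valid_type :: "nat \<Rightarrow> nat list \<Rightarrow> bool" where
  "valid_type n ty \<longleftrightarrow> ty \<noteq> [] \<and> 0 < hd ty \<and> sorted_wrt (<) ty \<and> last ty = n"

definition prevd :: "nat list \<Rightarrow> nat \<Rightarrow> nat" where
  "prevd ty l = (if l = 0 then 0 else ty ! (l - 1))"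

text \<open>Spaltenstein variety Sp(i_1,...,i_m): a flag is the list [F_{i_1},...,F_{i_m}], F_{i_0} = {0}.\<close>
definition Sp :: "nat \<Rightarrow> nat \<Rightarrow> nat list \<Rightarrow> vect set list set" where
  "Sp n k ty = {Fs. length Fs = length ty \<and>
     (\<forall>l < length ty. csubspace (Fs ! l) \<and> Fs ! l \<subseteq> Vsp n k \<and> cdim (Fs ! l) = ty ! l) \<and>
     (\<forall>l. Suc l < length ty \<longrightarrow> Fs ! l \<subseteq> Fs ! Suc l) \<and>
     (\<forall>l < length ty. Nop ` (Fs ! l) \<subseteq> (if l = 0 then {0} else Fs ! (l - 1)))}"

text \<open>Row strict tableaux: pair (top row, bottom row), rows read left to right.\<close>
definition row_strict_tableaux :: "nat \<Rightarrow> nat \<Rightarrow> nat list \<Rightarrow> (nat list \<times> nat list) set" where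
  "row_strict_tableaux n k ty = {(top, bot). length top = n - k \<and> length bot = k \<and>
     set (top @ bot) \<subseteq> set ty \<and>
     (\<forall>l < length ty. count_list (top @ bot) (ty ! l) = ty ! l - prevd ty l) \<and>
     sorted_wrt (>) top \<and> sorted_wrt (>) bot}"

definition tflag :: "nat list \<Rightarrow> nat list \<times> nat list \<Rightarrow> vect set list" where
  "tflag ty w = map (\<lambda>s. cspan ({bv True j | j. 1 \<le> j \<and> j \<le> length (filter (\<lambda>x. x \<le> s) (fst w))}
        \<union> {bv False r | r. 1 \<le> r \<and> r \<le> length (filter (\<lambda>x. x \<le> s) (snd w))})) ty"

definition cact :: "complex \<Rightarrow> vect \<Rightarrow> vect" where
  "cact t v = (\<lambda>(b, j). (if b then inverse t else t) * v (b, j))"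

definition flag_act :: "complex \<Rightarrow> vect set list \<Rightarrow> vect set list" where
  "flag_act t Fs = map (\<lambda>F. cact t ` F) Fs"

end

theory Submission
  imports Defs
begin

text \<open>
  A subspace fixed by the torus is the sum of its e-part and its f-part, since t = 2 acts by
  different scalars on the two weights. If it is also N-stable, each part is an initial segment
  span{e_1..e_a} resp. span{f_1..f_b}, because N lowers the top index of a vector by one. Hence the
  fixed flags in Sp are exactly the coordinate flags given by two sequences with a_l + b_l = i_l,
  bounded by n - k and k, that grow by 0 or 1 at each step (the latter is N F_{i_l} \<subseteq> F_{i_{l-1}}).
  Such pairs of sequences correspond to row strict tableaux: a_l and b_l count the entries \<le> i_l
  in the top and bottom row, and i_l lies in the top row exactly when a jumps at l.
\<close>

interpretation cv: vector_space cscale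
  by unfold_locales (auto simp: cscale_def algebra_simps fun_eq_iff)

definition coord_index :: "nat \<Rightarrow> nat \<Rightarrow> (bool \<times> nat) set" where
  "coord_index a b = {True} \<times> {1..a} \<union> {False} \<times> {1..b}"

definition coord_span :: "nat \<Rightarrow> nat \<Rightarrow> vect set" where
  "coord_span a b = cspan ({bv True j | j. 1 \<le> j \<and> j \<le> a} \<union> {bv False r | r. 1 \<le> r \<and> r \<le> b})"

lemma mem_coord_index: "(c, j) \<in> coord_index a b \<longleftrightarrow> 1 \<le> j \<and> j \<le> (if c then a else b)"
  by (auto simp: coord_index_def)

lemma finite_coord_index [simp]: "finite (coord_index a b)"
  by (simp add: coord_index_def)

lemma card_coord_index: "card (coord_index a b) = a + b"
  unfolding coord_index_def by (subst card_Un_disjoint) (auto simp: card_cartesian_product)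

lemma coord_span_basis: "coord_span a b = cv.span (case_prod bv ` coord_index a b)"
proof -
  have "{bv True j | j. 1 \<le> j \<and> j \<le> a} \<union> {bv False r | r. 1 \<le> r \<and> r \<le> b}
      = case_prod bv ` coord_index a b"
    by (auto simp: coord_index_def)
  then show ?thesis
    by (simp add: coord_span_def cspan_def)
qed

lemma bv_apply: "bv c j x = (if x = (c, j) then 1 else 0)"
  by (simp add: bv_def)

lemma bv_eq_iff [simp]: "bv c j = bv d i \<longleftrightarrow> c = d \<and> j = i"
  by (auto simp: bv_def fun_eq_iff)

lemma inj_basis: "inj (case_prod bv)"
  by (auto intro: injI)

lemma sum_vect_apply: "(\<Sum>y\<in>A. f y :: vect) x = (\<Sum>y\<in>A. f y x)"
  by (induction A rule: infinite_finite_induct) auto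

lemma vect_eq_sum_basis:
  assumes "finite X" and "{x. v x \<noteq> 0} \<subseteq> X"
  shows "v = (\<Sum>x\<in>X. cscale (v x) (case_prod bv x))"
proof
  fix y
  have "(\<Sum>x\<in>X. cscale (v x) (case_prod bv x)) y = (\<Sum>x\<in>X. if x = y then v y else 0)"
    unfolding sum_vect_apply by (rule sum.cong) (auto simp: cscale_def bv_apply)
  also have "\<dots> = v y"
    using assms by auto
  finally show "v y = (\<Sum>x\<in>X. cscale (v x) (case_prod bv x)) y" ..
qed

lemma mem_span_basis_if_support:
  assumes "finite X" and "{x. v x \<noteq> 0} \<subseteq> X"
  shows "v \<in> cv.span (case_prod bv ` X)"
  by (subst vect_eq_sum_basis[OF assms]) (intro cv.span_sum cv.span_scale cv.span_base imageI)

lemma independent_basis: "cv.independent (case_prod bv ` X)"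
  unfolding cv.independent_explicit_module
proof (intro allI impI)
  fix T u v
  assume T: "finite T" "T \<subseteq> case_prod bv ` X" and sum0: "(\<Sum>w\<in>T. cscale (u w) w) = 0"
    and v: "v \<in> T"
  obtain c j where vcj: "v = bv c j"
    using v T(2) by auto
  have "0 = (\<Sum>w\<in>T. cscale (u w) w) (c, j)"
    by (simp add: sum0)
  also have "\<dots> = (\<Sum>w\<in>T. if w = v then u v else 0)"
    unfolding sum_vect_apply
  proof (rule sum.cong)
    fix w
    assume "w \<in> T"
    with T(2) obtain d i where "w = bv d i" by auto
    then show "cscale (u w) w (c, j) = (if w = v then u v else 0)"
      by (auto simp: cscale_def bv_apply vcj)
  qed simp
  also have "\<dots> = u v"
    using T(1) v by simp
  finally show "u v = 0" ..
qed

lemma support_bv: "{x. bv c j x \<noteq> 0} = {(c, j)}"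
  by (auto simp: bv_apply)

lemma subspace_support_subset: "cv.subspace {v. {x. v x \<noteq> 0} \<subseteq> X}"
  unfolding cv.subspace_def
proof (intro conjI ballI allI)
  fix u w :: vect
  assume "u \<in> {v. {x. v x \<noteq> 0} \<subseteq> X}" "w \<in> {v. {x. v x \<noteq> 0} \<subseteq> X}"
  then show "u + w \<in> {v. {x. v x \<noteq> 0} \<subseteq> X}"
    by (auto simp: plus_fun_def subset_iff) (metis add.right_neutral)
next
  fix c and u :: vect
  assume "u \<in> {v. {x. v x \<noteq> 0} \<subseteq> X}"
  then show "cscale c u \<in> {v. {x. v x \<noteq> 0} \<subseteq> X}"
    by (auto simp: cscale_def)
qed simp

lemma span_basis_eq:
  assumes "finite X"
  shows "cv.span (case_prod bv ` X) = {v. {x. v x \<noteq> 0} \<subseteq> X}"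
proof
  show "cv.span (case_prod bv ` X) \<subseteq> {v. {x. v x \<noteq> 0} \<subseteq> X}"
    by (rule cv.span_minimal) (auto simp: bv_apply subspace_support_subset split: if_splits)
  show "{v. {x. v x \<noteq> 0} \<subseteq> X} \<subseteq> cv.span (case_prod bv ` X)"
    using mem_span_basis_if_support[OF assms] by blast
qed

lemma coord_span_eq: "coord_span a b = {v. {x. v x \<noteq> 0} \<subseteq> coord_index a b}"
  by (simp add: coord_span_basis span_basis_eq)

lemma subspace_coord_span: "csubspace (coord_span a b)"
  by (simp add: coord_span_basis csubspace_def)

lemma dim_coord_span: "cdim (coord_span a b) = a + b"
  by (simp add: coord_span_basis cdim_def cv.dim_span_eq_card_independent independent_basis
      cv.dim_eq_card_independent
      card_image[OF inj_on_subset[OF inj_basis]] card_coord_index)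

lemma bv_in_coord_span_iff: "bv c j \<in> coord_span a b \<longleftrightarrow> 1 \<le> j \<and> j \<le> (if c then a else b)"
  by (auto simp: coord_span_eq bv_apply mem_coord_index split: if_splits)

lemma coord_span_subset_iff: "coord_span a b \<subseteq> coord_span a' b' \<longleftrightarrow> a \<le> a' \<and> b \<le> b'"
proof
  assume sub: "coord_span a b \<subseteq> coord_span a' b'"
  have "j \<le> (if c then a' else b')" if "1 \<le> j" "j \<le> (if c then a else b)" for c j
  proof -
    have "bv c j \<in> coord_span a b"
      using that by (simp add: bv_in_coord_span_iff)
    with sub have "bv c j \<in> coord_span a' b'"
      by blast
    then show ?thesis
      by (simp add: bv_in_coord_span_iff)
  qed
  from this[where c = True and j = a] this[where c = False and j = b] show "a \<le> a' \<and> b \<le> b'"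
    by (cases "a = 0"; cases "b = 0") auto
qed (auto simp: coord_span_eq coord_index_def)

lemma coord_span_eq_iff: "coord_span a b = coord_span a' b' \<longleftrightarrow> a = a' \<and> b = b'"
  by (auto simp: set_eq_subset coord_span_subset_iff)

lemma coord_span_0_0: "coord_span 0 0 = {0}"
  by (auto simp: coord_span_eq coord_index_def fun_eq_iff)

lemma Nop_apply: "Nop v (c, j) = (if j = 0 then 0 else v (c, Suc j))"
  by (simp add: Nop_def)

lemma Nop_bv:
  assumes "j \<noteq> 0"
  shows "Nop (bv c (Suc j)) = bv c j"
proof
  fix x :: "bool \<times> nat"
  show "Nop (bv c (Suc j)) x = bv c j x"
    using assms by (cases x) (simp add: Nop_apply bv_apply)
qed

lemma Nop_image_coord_span: "Nop ` coord_span a b \<subseteq> coord_span (a - 1) (b - 1)"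
proof
  fix w
  assume "w \<in> Nop ` coord_span a b"
  then obtain v where v: "{x. v x \<noteq> 0} \<subseteq> coord_index a b" and w: "w = Nop v"
    by (auto simp: coord_span_eq)
  have "x \<in> coord_index (a - 1) (b - 1)" if "w x \<noteq> 0" for x
  proof -
    obtain c j where x: "x = (c, j)"
      by fastforce
    with that w have "j \<noteq> 0" "v (c, Suc j) \<noteq> 0"
      by (auto simp: Nop_apply split: if_splits)
    with v have "(c, Suc j) \<in> coord_index a b"
      by blast
    with \<open>j \<noteq> 0\<close> x show ?thesis
      by (cases c) (simp_all add: mem_coord_index)
  qed
  then show "w \<in> coord_span (a - 1) (b - 1)"
    by (auto simp: coord_span_eq)
qed

lemma Nop_image_coord_span_subset_iff:
  "Nop ` coord_span a b \<subseteq> coord_span a' b' \<longleftrightarrow> a \<le> a' + 1 \<and> b \<le> b' + 1"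
proof
  assume sub: "Nop ` coord_span a b \<subseteq> coord_span a' b'"
  have "j \<le> (if c then a' else b') + 1" if "j \<le> (if c then a else b)" for c j
  proof (cases "j \<le> 1")
    case False
    then obtain i where i: "j = Suc i" "i \<noteq> 0"
      by (cases j) auto
    with that have "bv c (Suc i) \<in> coord_span a b"
      by (simp add: bv_in_coord_span_iff)
    then have "bv c i \<in> coord_span a' b'"
      using sub Nop_bv[OF i(2)] by fastforce
    with i show ?thesis
      by (simp add: bv_in_coord_span_iff)
  qed auto
  from this[where c = True and j = a] this[where c = False and j = b]
  show "a \<le> a' + 1 \<and> b \<le> b' + 1"
    by simp
next
  assume "a \<le> a' + 1 \<and> b \<le> b' + 1"
  then have "coord_span (a - 1) (b - 1) \<subseteq> coord_span a' b'"
    unfolding coord_span_subset_iff by linarith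
  with Nop_image_coord_span show "Nop ` coord_span a b \<subseteq> coord_span a' b'"
    by blast
qed

lemma cact_image_coord_span:
  assumes t: "t \<noteq> 0"
  shows "cact t ` coord_span a b = coord_span a b"
proof
  have into: "cact s ` coord_span a b \<subseteq> coord_span a b" if "s \<noteq> 0" for s
    using that by (auto simp: coord_span_eq cact_def subset_iff split: if_splits)
  from into[OF t] show "cact t ` coord_span a b \<subseteq> coord_span a b" .
  show "coord_span a b \<subseteq> cact t ` coord_span a b"
  proof
    fix v
    assume "v \<in> coord_span a b"
    then have "cact (inverse t) v \<in> coord_span a b"
      using into[of "inverse t"] t by auto
    moreover have "v = cact t (cact (inverse t) v)"
      using t by (auto simp: fun_eq_iff cact_def)
    ultimately show "v \<in> cact t ` coord_span a b"
      by blast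
  qed
qed

lemma subspace_if_basis_in:
  assumes "csubspace F" and "finite X" and "\<And>c j. (c, j) \<in> X \<Longrightarrow> bv c j \<in> F"
    and "{x. v x \<noteq> 0} \<subseteq> X"
  shows "v \<in> F"
proof -
  have "cv.span (case_prod bv ` X) \<subseteq> F"
    using assms(1,3) by (intro cv.span_minimal) (auto simp: csubspace_def)
  with mem_span_basis_if_support[OF assms(2,4)] show ?thesis
    by blast
qed

definition weight_part :: "bool \<Rightarrow> vect \<Rightarrow> vect" where
  "weight_part c v = (\<lambda>x. if fst x = c then v x else 0)"

lemma weight_part_in_torus_stable:
  assumes F: "csubspace F" "cact 2 ` F \<subseteq> F" and v: "v \<in> F"
  shows "weight_part c v \<in> F"
proof -
  have sF: "cv.subspace F"
    using F(1) by (simp add: csubspace_def)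
  \<comment> \<open>cact 2 halves the e-coordinates and doubles the f-coordinates\<close>
  have "cact 2 v \<in> F"
    using F(2) v by blast
  then have "cscale (-2/3) (cact 2 v - cscale 2 v) \<in> F"
    by (intro cv.subspace_scale[OF sF] cv.subspace_diff[OF sF] v)
  moreover have "weight_part True v = cscale (-2/3) (cact 2 v - cscale 2 v)"
    by (auto simp: fun_eq_iff weight_part_def cscale_def cact_def)
  ultimately have "weight_part True v \<in> F"
    by simp
  moreover have "weight_part False v = v - weight_part True v"
    by (auto simp: fun_eq_iff weight_part_def)
  ultimately show ?thesis
    using v cv.subspace_diff[OF sF] by (cases c) auto
qed

lemma support_Nop:
  assumes "{x. u x \<noteq> 0} \<subseteq> {c} \<times> {1..Suc j}"
  shows "{x. Nop u x \<noteq> 0} \<subseteq> {c} \<times> {1..j}"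
proof
  fix x
  assume "x \<in> {x. Nop u x \<noteq> 0}"
  moreover obtain d l where x: "x = (d, l)"
    by fastforce
  ultimately have "l \<noteq> 0" "(d, Suc l) \<in> {c} \<times> {1..Suc j}"
    using assms by (auto simp: Nop_apply split: if_splits)
  with x show "x \<in> {c} \<times> {1..j}"
    by auto
qed

lemma N_stable_basis_below_top:
  assumes F: "csubspace F" "Nop ` F \<subseteq> F"
    and u: "u \<in> F" "{x. u x \<noteq> 0} \<subseteq> {c} \<times> {1..j}" "u (c, j) \<noteq> 0"
    and i: "i \<in> {1..j}"
  shows "bv c i \<in> F"
  using u i
proof (induction j arbitrary: u i)
  case 0
  then show ?case by simp
next
  case (Suc j)
  have sF: "cv.subspace F"
    using F(1) by (simp add: csubspace_def)
  have below: "bv c i \<in> F" if i: "i \<in> {1..j}" for i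
  proof (rule Suc.IH)
    show "Nop u \<in> F"
      using F(2) Suc.prems(1) by blast
    show "{x. Nop u x \<noteq> 0} \<subseteq> {c} \<times> {1..j}"
      using Suc.prems(2) by (rule support_Nop)
    show "Nop u (c, j) \<noteq> 0"
      using i Suc.prems(3) by (simp add: Nop_apply)
  qed (use i in auto)
  \<comment> \<open>r lies in the span of the basis vectors below index Suc j, all in F by the induction on N u\<close>
  define r where "r = u - cscale (u (c, Suc j)) (bv c (Suc j))"
  have supp_r: "{x. r x \<noteq> 0} \<subseteq> {c} \<times> {1..j}"
  proof
    fix x
    assume "x \<in> {x. r x \<noteq> 0}"
    then have "u x \<noteq> 0" "x \<noteq> (c, Suc j)"
      by (auto simp: r_def cscale_def bv_apply split: if_splits)
    with Suc.prems(2) show "x \<in> {c} \<times> {1..j}"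
      by (cases x) (auto simp: le_Suc_eq)
  qed
  have "r \<in> F"
    by (rule subspace_if_basis_in[OF F(1) _ _ supp_r]) (use below in auto)
  have "cscale (u (c, Suc j)) (bv c (Suc j)) = u - r"
    by (simp add: r_def)
  also have "\<dots> \<in> F"
    using cv.subspace_diff[OF sF Suc.prems(1) \<open>r \<in> F\<close>] .
  finally have "cscale (inverse (u (c, Suc j))) (cscale (u (c, Suc j)) (bv c (Suc j))) \<in> F"
    by (rule cv.subspace_scale[OF sF])
  with Suc.prems(3) have "bv c (Suc j) \<in> F"
    by (simp add: cv.scale_scale)
  with below Suc.prems(4) show ?case
    by (cases "i = Suc j") auto
qed

lemma N_stable_basis_below_support:
  assumes F: "csubspace F" "Nop ` F \<subseteq> F"
    and u: "u \<in> F" "finite {x. u x \<noteq> 0}" "{x. u x \<noteq> 0} \<subseteq> {c} \<times> {1..}" "u (c, j) \<noteq> 0"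
    and i: "i \<in> {1..j}"
  shows "bv c i \<in> F"
proof -
  define D where "D = {l. u (c, l) \<noteq> 0}"
  have "D = snd ` {x. u x \<noteq> 0}"
    using u(3) by (force simp: D_def)
  then have "finite D"
    using u(2) by simp
  moreover have "j \<in> D"
    using u(4) by (simp add: D_def)
  ultimately have top: "Max D \<in> D" and "j \<le> Max D"
    using Max_in by auto
  have "{x. u x \<noteq> 0} \<subseteq> {c} \<times> {1..Max D}"
    using u(3) \<open>finite D\<close> by (force simp: D_def)
  with top have "bv c i \<in> F" if "i \<in> {1..Max D}" for i
    using that by (intro N_stable_basis_below_top[OF F u(1)]) (auto simp: D_def)
  with i \<open>j \<le> Max D\<close> show ?thesis
    by simp
qed

lemma finite_basis_indices:
  assumes "F \<subseteq> coord_span p q"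
  shows "finite {j. bv c j \<in> F}"
proof (rule finite_subset)
  show "{j. bv c j \<in> F} \<subseteq> {..max p q}"
  proof
    fix j
    assume "j \<in> {j. bv c j \<in> F}"
    with assms have "bv c j \<in> coord_span p q"
      by blast
    then show "j \<in> {..max p q}"
      by (auto simp: bv_in_coord_span_iff split: if_splits)
  qed
qed simp

lemma support_weight_part:
  assumes "v \<in> coord_span p q"
  shows "finite {x. weight_part c v x \<noteq> 0}" and "{x. weight_part c v x \<noteq> 0} \<subseteq> {c} \<times> {1..}"
proof -
  have "{x. weight_part c v x \<noteq> 0} \<subseteq> coord_index p q"
    using assms by (auto simp: coord_span_eq weight_part_def)
  then show "finite {x. weight_part c v x \<noteq> 0}"
    by (rule finite_subset) simp
  show "{x. weight_part c v x \<noteq> 0} \<subseteq> {c} \<times> {1..}"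
  proof
    fix x
    assume x: "x \<in> {x. weight_part c v x \<noteq> 0}"
    with \<open>{x. weight_part c v x \<noteq> 0} \<subseteq> coord_index p q\<close> have "x \<in> coord_index p q"
      by blast
    with x show "x \<in> {c} \<times> {1..}"
      by (auto simp: weight_part_def coord_index_def split: if_splits)
  qed
qed

lemma stable_subspace_eq_coord_span:
  assumes F: "csubspace F" "F \<subseteq> coord_span p q" "Nop ` F \<subseteq> F" "cact 2 ` F \<subseteq> F"
  obtains a b where "F = coord_span a b"
proof -
  define M where "M c = Max (insert 0 {j. bv c j \<in> F})" for c
  note fin = finite_basis_indices[OF F(2)]
  have supp: "{x. v x \<noteq> 0} \<subseteq> coord_index p q" if "v \<in> F" for v
    using that F(2) by (auto simp: coord_span_eq)
  have upper: "j \<le> M c" if v: "v \<in> F" "v (c, j) \<noteq> 0" for v c j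
  proof -
    have "j \<ge> 1"
      using supp[OF v(1)] v(2) by (auto simp: mem_coord_index)
    with v have "bv c j \<in> F"
      using F(2) by (intro N_stable_basis_below_support[OF F(1,3) weight_part_in_torus_stable[OF F(1,4)]
            support_weight_part]) (auto simp: weight_part_def)
    then show ?thesis
      using fin by (simp add: M_def)
  qed
  have lower: "bv c i \<in> F" if "i \<in> {1..M c}" for c i
  proof -
    have "M c \<in> {j. bv c j \<in> F}"
      using that Max_in[of "insert 0 {j. bv c j \<in> F}"] fin by (auto simp: M_def)
    then have "bv c (M c) \<in> F"
      by simp
    then show ?thesis
    proof (rule N_stable_basis_below_support[OF F(1,3), where j = "M c"])
      show "finite {x. bv c (M c) x \<noteq> 0}" "bv c (M c) (c, M c) \<noteq> 0"
        by (simp_all add: support_bv bv_apply)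
      show "{x. bv c (M c) x \<noteq> 0} \<subseteq> {c} \<times> {1..}"
        using that by (simp add: support_bv)
    qed (rule that)
  qed
  have "F = coord_span (M True) (M False)"
  proof
    show "coord_span (M True) (M False) \<subseteq> F"
      unfolding coord_span_basis using F(1) lower
      by (intro cv.span_minimal) (auto simp: coord_index_def csubspace_def)
    show "F \<subseteq> coord_span (M True) (M False)"
    proof
      fix v
      assume v: "v \<in> F"
      have "(c, j) \<in> coord_index (M True) (M False)" if "v (c, j) \<noteq> 0" for c j
        using supp[OF v] that upper[OF v that] by (cases c) (auto simp: mem_coord_index)
      then show "v \<in> coord_span (M True) (M False)"
        by (auto simp: coord_span_eq)
    qed
  qed
  then show ?thesis
    by (rule that)
qed

text \<open>The value 0 at l = 0 matches the conventions i_0 = 0 and F_{i_0} = {0}.\<close>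

definition prev_at :: "(nat \<Rightarrow> nat) \<Rightarrow> nat \<Rightarrow> nat" where
  "prev_at A l = (if l = 0 then 0 else A (l - 1))"

lemma prevd_eq_prev_at: "prevd ty = prev_at ((!) ty)"
  by (simp add: fun_eq_iff prevd_def prev_at_def)

lemma prev_at_le_iff_mono: "(\<forall>l<m. prev_at A l \<le> A l) \<longleftrightarrow> (\<forall>l. Suc l < m \<longrightarrow> A l \<le> A (Suc l))"
  by (auto simp: prev_at_def) (metis Suc_pred less_Suc_eq not_gr0)

definition coord_flag :: "nat list \<Rightarrow> (nat \<Rightarrow> nat) \<Rightarrow> (nat \<Rightarrow> nat) \<Rightarrow> vect set list" where
  "coord_flag ty A B = map (\<lambda>l. coord_span (A l) (B l)) [0..<length ty]"

definition unit_steps :: "nat \<Rightarrow> (nat \<Rightarrow> nat) \<Rightarrow> bool" where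
  "unit_steps m A \<longleftrightarrow> (\<forall>l<m. prev_at A l \<le> A l \<and> A l \<le> prev_at A l + 1)"

text \<open>
  A l and B l are the numbers of e- and f-basis vectors spanning the l-th space of a coordinate
  flag, equivalently the numbers of entries \<le> i_l in the top and bottom row of a tableau.
\<close>

definition admissible :: "nat \<Rightarrow> nat \<Rightarrow> nat list \<Rightarrow> (nat \<Rightarrow> nat) \<Rightarrow> (nat \<Rightarrow> nat) \<Rightarrow> bool" where
  "admissible n k ty A B \<longleftrightarrow>
     (\<forall>l<length ty. A l + B l = ty ! l \<and> A l \<le> n - k \<and> B l \<le> k) \<and>
     unit_steps (length ty) A \<and> unit_steps (length ty) B"

lemma coord_flag_nth [simp]: "l < length ty \<Longrightarrow> coord_flag ty A B ! l = coord_span (A l) (B l)"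
  by (simp add: coord_flag_def)

lemma length_coord_flag [simp]: "length (coord_flag ty A B) = length ty"
  by (simp add: coord_flag_def)

lemma coord_flag_prev:
  "l < length ty \<Longrightarrow> (if l = 0 then {0} else coord_flag ty A B ! (l - 1))
     = coord_span (prev_at A l) (prev_at B l)"
  by (simp add: prev_at_def coord_span_0_0)

lemma coord_flag_in_Sp_iff: "coord_flag ty A B \<in> Sp n k ty \<longleftrightarrow> admissible n k ty A B"
proof -
  have "Vsp n k = coord_span (n - k) k"
    by (simp add: Vsp_def coord_span_def)
  then have "coord_flag ty A B \<in> Sp n k ty \<longleftrightarrow>
      (\<forall>l<length ty. A l \<le> n - k \<and> B l \<le> k \<and> A l + B l = ty ! l) \<and>
      (\<forall>l. Suc l < length ty \<longrightarrow> A l \<le> A (Suc l) \<and> B l \<le> B (Suc l)) \<and>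
      (\<forall>l<length ty. A l \<le> prev_at A l + 1 \<and> B l \<le> prev_at B l + 1)"
    by (simp add: Sp_def coord_flag_prev subspace_coord_span dim_coord_span coord_span_subset_iff
        Nop_image_coord_span_subset_iff cong: conj_cong)
  also have "\<dots> \<longleftrightarrow> admissible n k ty A B"
    unfolding admissible_def unit_steps_def
    using prev_at_le_iff_mono[of "length ty" A] prev_at_le_iff_mono[of "length ty" B]
    by blast
  finally show ?thesis .
qed

lemma flag_act_coord_flag: "t \<noteq> 0 \<Longrightarrow> flag_act t (coord_flag ty A B) = coord_flag ty A B"
  by (simp add: flag_act_def coord_flag_def cact_image_coord_span)

lemma coord_flag_eq_iff:
  "coord_flag ty A B = coord_flag ty A' B' \<longleftrightarrow> (\<forall>l<length ty. A l = A' l \<and> B l = B' l)"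
  by (auto simp: coord_flag_def coord_span_eq_iff)

lemma fixed_flag_eq_coord_flag:
  assumes Fs: "Fs \<in> Sp n k ty" and fixed: "\<forall>t. t \<noteq> 0 \<longrightarrow> flag_act t Fs = Fs"
  obtains A B where "Fs = coord_flag ty A B"
proof -
  have len: "length Fs = length ty"
    using Fs by (simp add: Sp_def)
  have "\<exists>a b. Fs ! l = coord_span a b" if l: "l < length ty" for l
  proof -
    have sub: "csubspace (Fs ! l)" and V: "Fs ! l \<subseteq> coord_span (n - k) k"
      using Fs l by (auto simp: Sp_def Vsp_def coord_span_def)
    have "Nop ` (Fs ! l) \<subseteq> (if l = 0 then {0} else Fs ! (l - 1))"
      using Fs l by (simp add: Sp_def)
    moreover have "(if l = 0 then {0} else Fs ! (l - 1)) \<subseteq> Fs ! l"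
    proof (cases "l = 0")
      case True
      then show ?thesis
        using sub cv.subspace_0 by (simp add: csubspace_def)
    next
      case False
      then have "Suc (l - 1) < length ty"
        using l by simp
      with Fs have "Fs ! (l - 1) \<subseteq> Fs ! Suc (l - 1)"
        unfolding Sp_def by blast
      with False show ?thesis
        by simp
    qed
    ultimately have N: "Nop ` (Fs ! l) \<subseteq> Fs ! l"
      by blast
    have "cact 2 ` (Fs ! l) = flag_act 2 Fs ! l"
      using l len by (simp add: flag_act_def)
    with fixed have "cact 2 ` (Fs ! l) \<subseteq> Fs ! l"
      by simp
    then obtain a b where "Fs ! l = coord_span a b"
      by (rule stable_subspace_eq_coord_span[OF sub V N])
    then show ?thesis
      by blast
  qed
  then obtain A B where "\<forall>l<length ty. Fs ! l = coord_span (A l) (B l)"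
    by metis
  with len have "Fs = coord_flag ty A B"
    by (simp add: list_eq_iff_nth_eq)
  then show ?thesis
    by (rule that)
qed

lemma fixed_flags_eq_admissible_coord_flags:
  "{Fs \<in> Sp n k ty. \<forall>t::complex. t \<noteq> 0 \<longrightarrow> flag_act t Fs = Fs}
     = {coord_flag ty A B | A B. admissible n k ty A B}"
proof (intro equalityI subsetI)
  fix Fs
  assume "Fs \<in> {Fs \<in> Sp n k ty. \<forall>t::complex. t \<noteq> 0 \<longrightarrow> flag_act t Fs = Fs}"
  then have Sp: "Fs \<in> Sp n k ty" and fixed: "\<forall>t::complex. t \<noteq> 0 \<longrightarrow> flag_act t Fs = Fs"
    by simp_all
  obtain A B where Fs: "Fs = coord_flag ty A B"
    by (rule fixed_flag_eq_coord_flag[OF Sp fixed])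
  with Sp show "Fs \<in> {coord_flag ty A B | A B. admissible n k ty A B}"
    by (auto simp: coord_flag_in_Sp_iff)
next
  fix Fs
  assume "Fs \<in> {coord_flag ty A B | A B. admissible n k ty A B}"
  then obtain A B where Fs: "Fs = coord_flag ty A B" and "admissible n k ty A B"
    by blast
  then show "Fs \<in> {Fs \<in> Sp n k ty. \<forall>t::complex. t \<noteq> 0 \<longrightarrow> flag_act t Fs = Fs}"
    by (simp add: coord_flag_in_Sp_iff flag_act_coord_flag)
qed

definition count_le :: "nat list \<Rightarrow> nat \<Rightarrow> nat" where
  "count_le xs s = length (filter (\<lambda>x. x \<le> s) xs)"

lemma count_le_simps [simp]:
  "count_le [] s = 0"
  "count_le (x # xs) s = (if x \<le> s then 1 else 0) + count_le xs s"
  by (auto simp: count_le_def)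

lemma count_le_append [simp]: "count_le (xs @ ys) s = count_le xs s + count_le ys s"
  by (simp add: count_le_def)

lemma count_le_le_length: "count_le xs s \<le> length xs"
  by (simp add: count_le_def)

definition row_counts :: "nat list \<Rightarrow> nat list \<Rightarrow> nat \<Rightarrow> nat" where
  "row_counts ty xs l = count_le xs (ty ! l)"

lemma tflag_eq_coord_flag: "tflag ty w = coord_flag ty (row_counts ty (fst w)) (row_counts ty (snd w))"
  unfolding tflag_def coord_flag_def
  by (rule nth_equalityI) (simp_all add: coord_span_def row_counts_def count_le_def)

lemma prev_at_telescope:
  assumes "\<forall>l<m. f l = prev_at f l + d l" and "\<forall>l<m. g l = prev_at g l + d l"
  shows "l < m \<Longrightarrow> f l = g l"
proof (induction l)
  case 0
  with assms show ?case
    by (simp add: prev_at_def)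
next
  case (Suc l)
  with assms show ?case
    by (metis Suc_lessD diff_Suc_1 nat.discI prev_at_def)
qed

lemma distinct_if_sorted_desc: "sorted_wrt (>) (xs :: 'a :: linorder list) \<Longrightarrow> distinct xs"
  by (metis distinct_rev sorted_wrt_rev strict_sorted_iff)

lemma count_list_distinct: "distinct xs \<Longrightarrow> count_list xs x = (if x \<in> set xs then 1 else 0)"
  by (induction xs) auto

lemma sorted_desc_eq_if_count_list_eq:
  assumes "sorted_wrt (>) (xs :: 'a :: linorder list)" "sorted_wrt (>) ys" "\<And>x. count_list xs x = count_list ys x"
  shows "xs = ys"
proof -
  have "set xs = set ys"
    using assms(3) count_list_0_iff by (metis equalityI subsetI)
  moreover have "sorted_wrt (<) (rev xs)" "sorted_wrt (<) (rev ys)"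
    using assms(1,2) by (simp_all add: sorted_wrt_rev)
  ultimately have "rev xs = rev ys"
    by (intro sorted_distinct_set_unique) (simp_all add: strict_sorted_iff)
  then show ?thesis
    by simp
qed

locale flag_type =
  fixes n :: nat and ty :: "nat list"
  assumes valid: "valid_type n ty"
begin

lemma ty_nonempty: "ty \<noteq> []"
  using valid by (simp add: valid_type_def)

lemma ty_nth_less_iff: "i < length ty \<Longrightarrow> j < length ty \<Longrightarrow> ty ! i < ty ! j \<longleftrightarrow> i < j"
  using valid unfolding valid_type_def by (metis nat_neq_iff order_less_asym sorted_wrt_nth_less)

lemma ty_nth_le_iff: "i < length ty \<Longrightarrow> j < length ty \<Longrightarrow> ty ! i \<le> ty ! j \<longleftrightarrow> i \<le> j"
  using ty_nth_less_iff by (metis not_le)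

lemma distinct_ty: "distinct ty"
  using valid strict_sorted_iff by (auto simp: valid_type_def)

lemma ty_pos: "i < length ty \<Longrightarrow> 0 < ty ! i"
  using valid ty_nth_le_iff[of 0 i] by (auto simp: valid_type_def hd_conv_nth)

lemma ty_last: "ty ! (length ty - 1) = n"
  using valid by (auto simp: valid_type_def last_conv_nth)

lemma ty_le_n: "x \<in> set ty \<Longrightarrow> x \<le> n"
  using ty_nth_le_iff[of _ "length ty - 1"] ty_last ty_nonempty by (auto simp: in_set_conv_nth)

lemma prev_at_ty_less: "l < length ty \<Longrightarrow> prev_at ((!) ty) l < ty ! l"
  using ty_pos ty_nth_less_iff by (auto simp: prev_at_def)

lemma le_ty_nth_iff:
  assumes "x \<in> set ty" and "l < length ty"
  shows "x \<le> ty ! l \<longleftrightarrow> x \<le> prev_at ((!) ty) l \<or> x = ty ! l"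
proof -
  obtain j where j: "j < length ty" "x = ty ! j"
    using assms(1) by (auto simp: in_set_conv_nth)
  show ?thesis
    using j assms(2) ty_pos[of j] ty_nth_le_iff[of j l] ty_nth_le_iff[of j "l - 1"]
      nth_eq_iff_index_eq[OF distinct_ty, of j l]
    by (auto simp: prev_at_def)
qed

lemma row_counts_step:
  assumes "set xs \<subseteq> set ty" and l: "l < length ty"
  shows "row_counts ty xs l = prev_at (row_counts ty xs) l + count_list xs (ty ! l)"
proof -
  have "count_le xs (ty ! l) = count_le xs (prev_at ((!) ty) l) + count_list xs (ty ! l)"
    using assms(1) le_ty_nth_iff[OF _ l] prev_at_ty_less[OF l] by (induction xs) auto
  moreover have "count_le xs (prev_at ((!) ty) l) = prev_at (row_counts ty xs) l"
  proof -
    have "count_le xs 0 = 0"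
      using assms(1) ty_pos by (induction xs) (auto simp: in_set_conv_nth)
    then show ?thesis
      by (simp add: prev_at_def row_counts_def)
  qed
  ultimately show ?thesis
    by (simp add: row_counts_def)
qed

lemma unit_steps_row_counts:
  assumes "set xs \<subseteq> set ty" and "sorted_wrt (>) xs"
  shows "unit_steps (length ty) (row_counts ty xs)"
  unfolding unit_steps_def
proof (intro allI impI)
  fix l
  assume "l < length ty"
  then have "row_counts ty xs l = prev_at (row_counts ty xs) l + count_list xs (ty ! l)"
    using row_counts_step assms(1) by blast
  moreover have "count_list xs (ty ! l) \<le> 1"
    using count_list_distinct[OF distinct_if_sorted_desc[OF assms(2)]] by simp
  ultimately show "prev_at (row_counts ty xs) l \<le> row_counts ty xs l \<and>
      row_counts ty xs l \<le> prev_at (row_counts ty xs) l + 1"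
    by simp
qed

lemma tableau_admissible:
  assumes "w \<in> row_strict_tableaux n k ty"
  shows "admissible n k ty (row_counts ty (fst w)) (row_counts ty (snd w))"
proof -
  obtain top bot where w: "w = (top, bot)"
    by fastforce
  have len: "length top = n - k" "length bot = k" and sub: "set (top @ bot) \<subseteq> set ty"
    and counts: "\<forall>l<length ty. count_list (top @ bot) (ty ! l) = ty ! l - prevd ty l"
    and sorted: "sorted_wrt (>) top" "sorted_wrt (>) bot"
    using assms by (auto simp: w row_strict_tableaux_def)
  have "row_counts ty (top @ bot) l = ty ! l" if "l < length ty" for l
  proof (rule prev_at_telescope[OF _ _ that])
    show "\<forall>l<length ty. row_counts ty (top @ bot) l
        = prev_at (row_counts ty (top @ bot)) l + (ty ! l - prevd ty l)"
      using row_counts_step[OF sub] counts by simp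
    show "\<forall>l<length ty. ty ! l = prev_at ((!) ty) l + (ty ! l - prevd ty l)"
      using prev_at_ty_less by (simp add: prevd_eq_prev_at less_imp_le)
  qed
  then have "\<forall>l<length ty. row_counts ty top l + row_counts ty bot l = ty ! l"
    by (simp add: row_counts_def)
  moreover have "row_counts ty top l \<le> n - k" "row_counts ty bot l \<le> k" for l
    using count_le_le_length[of top] count_le_le_length[of bot] len by (simp_all add: row_counts_def)
  moreover have "unit_steps (length ty) (row_counts ty top)" "unit_steps (length ty) (row_counts ty bot)"
    using sub sorted by (simp_all add: unit_steps_row_counts)
  ultimately show ?thesis
    by (simp add: admissible_def w)
qed

lemma row_eq_if_counts_eq:
  assumes xs: "set xs \<subseteq> set ty" "sorted_wrt (>) xs" and ys: "set ys \<subseteq> set ty" "sorted_wrt (>) ys"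
    and eq: "\<forall>l<length ty. row_counts ty xs l = row_counts ty ys l"
  shows "xs = ys"
proof (rule sorted_desc_eq_if_count_list_eq[OF xs(2) ys(2)])
  fix x
  show "count_list xs x = count_list ys x"
  proof (cases "x \<in> set ty")
    case True
    then obtain l where l: "l < length ty" "x = ty ! l"
      by (auto simp: in_set_conv_nth)
    have "prev_at (row_counts ty xs) l = prev_at (row_counts ty ys) l"
      using eq l(1) by (simp add: prev_at_def)
    then show ?thesis
      using row_counts_step[OF xs(1) l(1)] row_counts_step[OF ys(1) l(1)] eq l by simp
  next
    case False
    with xs(1) ys(1) show ?thesis
      by (metis count_notin subsetD)
  qed
qed

text \<open>The inverse of row_counts: i_l is put into the row exactly when A jumps at l.\<close>

definition row_of :: "(nat \<Rightarrow> nat) \<Rightarrow> nat list" where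
  "row_of A = rev (map ((!) ty) (filter (\<lambda>l. A l = prev_at A l + 1) [0..<length ty]))"

lemma set_row_of: "set (row_of A) \<subseteq> set ty"
  by (auto simp: row_of_def)

lemma sorted_row_of: "sorted_wrt (>) (row_of A)"
proof -
  have "sorted_wrt (\<lambda>i j. ty ! i < ty ! j) (filter (\<lambda>l. A l = prev_at A l + 1) [0..<length ty])"
    by (rule sorted_wrt_mono_rel[OF _ sorted_wrt_filter[OF sorted_wrt_upt]]) (auto simp: ty_nth_less_iff)
  then show ?thesis
    by (simp add: row_of_def sorted_wrt_rev sorted_wrt_map)
qed

lemma count_list_row_of:
  assumes A: "unit_steps (length ty) A" and l: "l < length ty"
  shows "count_list (row_of A) (ty ! l) = A l - prev_at A l"
proof -
  have "count_list (map ((!) ty) is) (ty ! l) = count_list is l" if "set is \<subseteq> {..<length ty}" for "is"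
    using that l by (induction "is") (auto simp: nth_eq_iff_index_eq[OF distinct_ty])
  then have "count_list (row_of A) (ty ! l) = count_list (filter (\<lambda>l. A l = prev_at A l + 1) [0..<length ty]) l"
    unfolding row_of_def count_list_rev by (metis atLeast0LessThan set_filter set_upt subsetI mem_Collect_eq)
  also have "\<dots> = (if A l = prev_at A l + 1 then 1 else 0)"
    using l by (simp add: count_list_distinct)
  also have "\<dots> = A l - prev_at A l"
    using A l by (auto simp: unit_steps_def)
  finally show ?thesis .
qed

lemma row_counts_row_of:
  assumes A: "unit_steps (length ty) A" and l: "l < length ty"
  shows "row_counts ty (row_of A) l = A l"
proof (rule prev_at_telescope[OF _ _ l])
  show "\<forall>l<length ty. row_counts ty (row_of A) l = prev_at (row_counts ty (row_of A)) l + (A l - prev_at A l)"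
    using row_counts_step[OF set_row_of] count_list_row_of[OF A] by simp
  show "\<forall>l<length ty. A l = prev_at A l + (A l - prev_at A l)"
    using A by (simp add: unit_steps_def)
qed

lemma length_row_of:
  assumes "unit_steps (length ty) A"
  shows "length (row_of A) = A (length ty - 1)"
proof -
  have "length (row_of A) = count_le (row_of A) n"
  proof -
    have "\<forall>x\<in>set (row_of A). x \<le> n"
      using set_row_of ty_le_n by blast
    then show ?thesis
      by (simp add: count_le_def)
  qed
  also have "\<dots> = row_counts ty (row_of A) (length ty - 1)"
    using ty_last by (simp add: row_counts_def)
  also have "\<dots> = A (length ty - 1)"
    using row_counts_row_of[OF assms] ty_nonempty by simp
  finally show ?thesis .
qed

lemma admissible_tableau:
  assumes adm: "admissible n k ty A B" and "k \<le> n"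
  shows "(row_of A, row_of B) \<in> row_strict_tableaux n k ty"
proof -
  have sum: "A l + B l = ty ! l" and bounds: "A l \<le> n - k" "B l \<le> k" if "l < length ty" for l
    using adm that by (auto simp: admissible_def)
  have steps: "unit_steps (length ty) A" "unit_steps (length ty) B"
    using adm by (simp_all add: admissible_def)
  have last: "length ty - 1 < length ty"
    using ty_nonempty by simp
  have "A (length ty - 1) = n - k" "B (length ty - 1) = k"
    using sum[OF last] bounds[OF last] ty_last \<open>k \<le> n\<close> by linarith+
  then have len: "length (row_of A) = n - k" "length (row_of B) = k"
    using length_row_of steps by simp_all
  have "count_list (row_of A @ row_of B) (ty ! l) = ty ! l - prevd ty l" if l: "l < length ty" for l
  proof -
    have "prev_at A l + prev_at B l = prevd ty l"
      using sum l by (simp add: prev_at_def prevd_def)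
    moreover have "prev_at A l \<le> A l" "prev_at B l \<le> B l"
      using steps l by (simp_all add: unit_steps_def)
    ultimately show ?thesis
      using sum[OF l] count_list_row_of[OF steps(1) l] count_list_row_of[OF steps(2) l] by simp
  qed
  then show ?thesis
    using len set_row_of sorted_row_of by (auto simp: row_strict_tableaux_def)
qed


lemma inj_on_tflag: "inj_on (tflag ty) (row_strict_tableaux n k ty)"
proof (rule inj_onI)
  fix w w'
  assume w: "w \<in> row_strict_tableaux n k ty" and w': "w' \<in> row_strict_tableaux n k ty"
    and "tflag ty w = tflag ty w'"
  then have "\<forall>l<length ty. row_counts ty (fst w) l = row_counts ty (fst w') l"
    "\<forall>l<length ty. row_counts ty (snd w) l = row_counts ty (snd w') l"
    by (simp_all add: tflag_eq_coord_flag coord_flag_eq_iff)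
  moreover have rows: "set (fst v) \<subseteq> set ty" "sorted_wrt (>) (fst v)"
    "set (snd v) \<subseteq> set ty" "sorted_wrt (>) (snd v)" if "v \<in> row_strict_tableaux n k ty" for v
    using that by (auto simp: row_strict_tableaux_def)
  ultimately have "fst w = fst w'" "snd w = snd w'"
    using row_eq_if_counts_eq[OF rows(1,2)[OF w] rows(1,2)[OF w']]
      row_eq_if_counts_eq[OF rows(3,4)[OF w] rows(3,4)[OF w']] by simp_all
  then show "w = w'"
    by (simp add: prod_eq_iff)
qed

lemma tflag_image:
  assumes "k \<le> n"
  shows "tflag ty ` row_strict_tableaux n k ty = {coord_flag ty A B | A B. admissible n k ty A B}"
proof (intro equalityI subsetI)
  fix Fs
  assume "Fs \<in> tflag ty ` row_strict_tableaux n k ty"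
  then obtain w where w: "w \<in> row_strict_tableaux n k ty" and "Fs = tflag ty w"
    by blast
  then have "Fs = coord_flag ty (row_counts ty (fst w)) (row_counts ty (snd w))"
    by (simp add: tflag_eq_coord_flag)
  with tableau_admissible[OF w] show "Fs \<in> {coord_flag ty A B | A B. admissible n k ty A B}"
    by blast
next
  fix Fs
  assume "Fs \<in> {coord_flag ty A B | A B. admissible n k ty A B}"
  then obtain A B where Fs: "Fs = coord_flag ty A B" and adm: "admissible n k ty A B"
    by blast
  then have steps: "unit_steps (length ty) A" "unit_steps (length ty) B"
    by (simp_all add: admissible_def)
  have "tflag ty (row_of A, row_of B) = Fs"
    by (simp add: Fs tflag_eq_coord_flag coord_flag_eq_iff row_counts_row_of[OF steps(1)]
        row_counts_row_of[OF steps(2)])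
  moreover have "(row_of A, row_of B) \<in> row_strict_tableaux n k ty"
    by (rule admissible_tableau[OF adm assms])
  ultimately show "Fs \<in> tflag ty ` row_strict_tableaux n k ty"
    by (metis image_eqI)
qed

end

theorem lemma5p2:
  fixes n k :: nat and ty :: "nat list"
  assumes "2 * k \<le> n" and "valid_type n ty"
  shows "bij_betw (tflag ty) (row_strict_tableaux n k ty)
           {Fs \<in> Sp n k ty. \<forall>t::complex. t \<noteq> 0 \<longrightarrow> flag_act t Fs = Fs}"
proof -
  interpret flag_type n ty
    by (rule flag_type.intro) (fact assms(2))
  have "k \<le> n"
    using assms(1) by simp
  then show ?thesis
    unfolding bij_betw_def fixed_flags_eq_admissible_coord_flags
    by (simp add: inj_on_tflag tflag_image)
qed

end
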